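(* Let $\Sigma$ be a two-letter alphabet and $\Gamma$ a finite alphabet with at least two letters. There exists an infinite word $w\in\Sigma^{\mathbb{N}}$ with $\mathrm{ACE}_{\mathcal{I}}(w) = 1$.
   Context: $\mathrm{Fact}_n(w)$ is the set of length-$n$ factors of $w$. For a nonempty word $v$ and integer $p\ge0$, $v^{p/|v|}$ is the prefix of length $p$ of $vvv\cdots$. For a nonempty finite word $x$, $\mathrm{E}(x) = \sup\{ r \in \mathbb{Q} : x = v^r \text{ for some nonempty } v\}$. $\mathrm{ACE}(w) = \limsup_{n\to\infty}\sup\{\mathrm{E}(x) : x\in\mathrm{Fact}_n(w)\}$. $\mathcal{I}$ is the set of injective morphisms $\Sigma^*\to\Gamma^*$ and $\mathrm{ACE}_{\mathcal{I}}(w) = \sup\{\mathrm{ACE}(h(w)) : h\in\mathcal{I}\}$. *)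

theory Defs
  imports Complex_Main "HOL-Library.Extended_Real" "HOL-Library.Liminf_Limsup"
begin

text \<open>v^(p/|v|): the prefix of length p of v v v ...\<close>
definition frac_pow :: "'a list \<Rightarrow> nat \<Rightarrow> 'a list" where
  "frac_pow v p = take p (concat (replicate p v))"

text \<open>E(x) = sup { r in Q : x = v^r for some nonempty v }; x = v^r forces r = |x|/|v|.\<close>
definition Exp :: "'a list \<Rightarrow> real" where
  "Exp x = Sup {real (length x) / real (length v) | v. v \<noteq> [] \<and> x = frac_pow v (length x)}"

definition Fact :: "nat \<Rightarrow> (nat \<Rightarrow> 'a) \<Rightarrow> 'a list set" where
  "Fact n w = {map w [i..<i+n] | i. True}"

definition ACE :: "(nat \<Rightarrow> 'a) \<Rightarrow> ereal" where
  "ACE w = limsup (\<lambda>n. SUP x \<in> Fact n w. ereal (Exp x))"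

definition morph :: "('a \<Rightarrow> 'b list) \<Rightarrow> 'a list \<Rightarrow> 'b list" where
  "morph h u = concat (map h u)"

text \<open>Image of an infinite word under a (non-erasing) morphism: letter k of h(w).
  For injective morphisms every letter image is nonempty, so this is well defined.\<close>
definition morph_inf :: "('a \<Rightarrow> 'b list) \<Rightarrow> (nat \<Rightarrow> 'a) \<Rightarrow> nat \<Rightarrow> 'b" where
  "morph_inf h w k = morph h (map w [0..<Suc k]) ! k"

definition ACE_inj :: "'b itself \<Rightarrow> (nat \<Rightarrow> 'a) \<Rightarrow> ereal" where
  "ACE_inj _ w = (SUP h \<in> {h :: 'a \<Rightarrow> 'b list. inj (morph h)}. ACE (morph_inf h w))"

end

theory Submission
  imports Defs "HOL-Library.Sublist" "HOL-Real_Asymp.Real_Asymp"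
begin

text \<open>
  Call a factor of period p and length p + L of an image h(w) long if p \<le> L^2 and L exceeds a
  threshold depending on the maximal length M of a letter image. Images without long factors
  of this kind have asymptotic critical exponent 1, since any other factor of length n with
  period q has excess n - q = o(q).

  A binary word is good if no injective morphism creates such a factor in its image. A bad
  one-letter extension of a good word of length n is determined by M, h, the depth d at which
  the repetition starts in the word, (L, p) with L \<le> M (d + 2), a good prefix of length n - d
  and a tail whose image continues the image of that prefix periodically; given these, the tail
  has O(L) possibilities because h is injective. If the number G(n) of good words has grown by a
  factor 3/2 per letter so far, there are at most (2/3)^d G(n) good prefixes of length n - d,
  so the bad extensions are bounded by G(n) times a convergent series in d; thresholds beyond
  its tails make them at most G(n)/2, so at least 3/2 G(n) of the 2 G(n) one-letter extensions
  are good. Hence good words exist in every length, and by Koenig's lemma some infinite word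
  has only good prefixes.
\<close>

section \<open>Images under morphisms\<close>

lemma morph_Nil [simp]: "morph h [] = []"
  by (simp add: morph_def)

lemma morph_Cons [simp]: "morph h (c # u) = h c @ morph h u"
  by (simp add: morph_def)

lemma morph_append [simp]: "morph h (u @ v) = morph h u @ morph h v"
  by (simp add: morph_def)

lemma inj_morph_nonempty: "inj (morph h) \<Longrightarrow> h c \<noteq> []"
  using injD[of "morph h" "[c]" "[]"] by auto

lemma length_le_length_morph: "(\<And>c. h c \<noteq> []) \<Longrightarrow> length u \<le> length (morph h u)"
proof (induction u)
  case (Cons c u)
  then have "1 \<le> length (h c)" by (simp add: Suc_le_eq)
  with Cons show ?case by simp
qed simp

lemma length_morph_le: "(\<And>c. length (h c) \<le> M) \<Longrightarrow> length (morph h u) \<le> M * length u"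
  by (induction u) (auto simp: add_mono)

lemma prefix_morph_take: "prefix (morph h (take s u)) (morph h u)"
  by (metis append_take_drop_id morph_append prefix_def)

lemma morph_drop: "morph h (drop s u) = drop (length (morph h (take s u))) (morph h u)"
  by (metis append_eq_conv_conj append_take_drop_id morph_append)

lemma morph_cut_below:
  assumes "\<And>c. length (h c) \<le> M" "0 < M" "prefix u (morph h x)"
  shows "\<exists>k. prefix (morph h (take k x)) u \<and> length u < length (morph h (take k x)) + M"
  using assms(3)
proof (induction x arbitrary: u)
  case Nil
  then show ?case using assms(2) by (intro exI[of _ 0]) simp
next
  case (Cons c x)
  show ?case
  proof (cases "length u < length (h c)")
    case True
    then show ?thesis using assms(1)[of c] by (intro exI[of _ 0]) simp
  next
    case False
    with Cons.prems obtain u' where u: "u = h c @ u'" "prefix u' (morph h x)"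
      by (metis append_eq_append_conv order_le_imp_less_or_eq prefixE prefix_append
          prefix_length_le same_prefix_prefix morph_Cons)
    then obtain k where "prefix (morph h (take k x)) u'" "length u' < length (morph h (take k x)) + M"
      using Cons.IH by blast
    then show ?thesis using u by (intro exI[of _ "Suc k"]) simp
  qed
qed

lemma morph_cut_above:
  assumes "\<And>c. length (h c) \<le> M" "0 < M" "m \<le> length (morph h x)"
  shows "\<exists>k. m \<le> length (morph h (take k x)) \<and> length (morph h (take k x)) < m + M"
  using assms(3)
proof (induction x arbitrary: m)
  case Nil
  then show ?case using assms(2) by (intro exI[of _ 0]) simp
next
  case (Cons c x)
  consider "m = 0" | "0 < m" "m \<le> length (h c)" | "length (h c) < m" by linarith
  then show ?case
  proof cases
    case 1
    then show ?thesis using assms(2) by (intro exI[of _ 0]) simp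
  next
    case 2
    then show ?thesis using assms(1)[of c] by (intro exI[of _ 1]) simp
  next
    case 3
    have "m - length (h c) \<le> length (morph h x)" using Cons.prems by simp
    then obtain k where "m - length (h c) \<le> length (morph h (take k x))"
      "length (morph h (take k x)) < m - length (h c) + M"
      using Cons.IH by blast
    then show ?thesis using 3 by (intro exI[of _ "Suc k"]) auto
  qed
qed

lemma nth_morph_inf:
  assumes "\<And>c. h c \<noteq> []" and "k < length (morph h (map w [0..<n]))"
  shows "morph_inf h w k = morph h (map w [0..<n]) ! k"
proof -
  have prefix: "morph h (map w [0..<m]) ! k = morph h (map w [0..<m + l]) ! k"
    if "k < length (morph h (map w [0..<m]))" for m l
    using that upt_add_eq_append[of 0 m l] by (simp add: nth_append)
  have "k < length (morph h (map w [0..<Suc k]))"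
    using length_le_length_morph[of h "map w [0..<Suc k]"] assms(1) by simp
  then have "morph_inf h w k = morph h (map w [0..<Suc k + n]) ! k"
    unfolding morph_inf_def by (rule prefix)
  also have "\<dots> = morph h (map w [0..<n]) ! k"
    using prefix[OF assms(2), of "Suc k"] by (simp add: add.commute)
  finally show ?thesis .
qed

section \<open>Exponents\<close>

lemma concat_replicate_nth:
  "j < k * length v \<Longrightarrow> concat (replicate k v) ! j = v ! (j mod length v)"
proof (induction k arbitrary: j)
  case (Suc k)
  show ?case
  proof (cases "j < length v")
    case False
    then have "j - length v < k * length v" using Suc.prems by auto
    then show ?thesis using False Suc.IH by (simp add: nth_append le_mod_geq)
  qed (simp add: nth_append)
qed simp

lemma frac_pow_nth: "v \<noteq> [] \<Longrightarrow> j < p \<Longrightarrow> frac_pow v p ! j = v ! (j mod length v)"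
  by (simp add: frac_pow_def concat_replicate_nth less_le_trans[of j p "p * length v"] Suc_leI)

lemma length_frac_pow: "v \<noteq> [] \<Longrightarrow> length (frac_pow v p) = p"
  by (simp add: frac_pow_def length_concat sum_list_replicate Suc_leI)

lemma frac_pow_self: "x \<noteq> [] \<Longrightarrow> frac_pow x (length x) = x"
  by (rule nth_equalityI) (auto simp: length_frac_pow frac_pow_nth)

lemma frac_pow_periodic:
  assumes "v \<noteq> []" "x = frac_pow v (length x)" "j + length v < length x"
  shows "x ! j = x ! (j + length v)"
  using assms frac_pow_nth[of v j "length x"] frac_pow_nth[of v "j + length v" "length x"]
  by (metis add_lessD1 mod_add_self2)

lemma bdd_above_Exp_set:
  "bdd_above {real (length x) / real (length v) | v. v \<noteq> [] \<and> x = frac_pow v (length x)}"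
proof (rule bdd_aboveI)
  fix r assume "r \<in> {real (length x) / real (length v) | v. v \<noteq> [] \<and> x = frac_pow v (length x)}"
  then obtain v :: "'a list" where "v \<noteq> []" "r = real (length x) / real (length v)" by auto
  then show "r \<le> real (length x)" by (simp add: divide_le_eq mult_le_cancel_left1 Suc_leI)
qed

lemma Exp_ge_1: "x \<noteq> [] \<Longrightarrow> 1 \<le> Exp x"
  unfolding Exp_def
  by (rule cSup_upper2[OF _ _ bdd_above_Exp_set, where x = 1]) (auto simp: frac_pow_self)

lemma Exp_le:
  assumes "x \<noteq> []"
    and "\<And>v. v \<noteq> [] \<Longrightarrow> x = frac_pow v (length x) \<Longrightarrow> real (length x) / real (length v) \<le> r"
  shows "Exp x \<le> r"
  unfolding Exp_def by (rule cSup_least) (use assms frac_pow_self[OF assms(1)] in auto)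

lemma ACE_ge_1: "1 \<le> ACE z"
  unfolding ACE_def
proof (rule le_Limsup)
  show "\<forall>\<^sub>F n in sequentially. 1 \<le> (SUP x\<in>Fact n z. ereal (Exp x))"
    unfolding eventually_sequentially
  proof (intro exI[of _ 1] allI impI)
    fix n :: nat assume "1 \<le> n"
    have "map z [0..<0 + n] \<in> Fact n z" unfolding Fact_def by blast
    with \<open>1 \<le> n\<close> show "1 \<le> (SUP x\<in>Fact n z. ereal (Exp x))"
      by (intro SUP_upper2[of "map z [0..<0 + n]"]) (auto simp: Exp_ge_1)
  qed
qed simp

text \<open>If L < N then q is large; if L^2 < q then L / q < 1 / L, which is small unless
  L < 1 / e, in which case q is large again.\<close>
lemma overhang_le:
  fixes e L q N :: real
  assumes "0 < e" "0 \<le> L" "0 \<le> N" "N + N / e + 1 / e + 1 / e\<^sup>2 \<le> L + q" "L < N \<or> L\<^sup>2 < q"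
  shows "L \<le> e * q"
proof -
  have "0 \<le> 1 / e" "0 \<le> 1 / e\<^sup>2" "0 \<le> N / e" using assms(1,3) by simp_all
  consider "L < N" | "L\<^sup>2 < q" "1 \<le> L * e" | "L\<^sup>2 < q" "L * e < 1" using assms(5) by linarith
  then show ?thesis
  proof cases
    case 1
    then have "N / e \<le> q" using assms(4) \<open>0 \<le> 1 / e\<close> \<open>0 \<le> 1 / e\<^sup>2\<close> by linarith
    then have "N \<le> e * q" using assms(1) by (simp add: divide_le_eq mult.commute)
    with 1 show ?thesis by simp
  next
    case 2
    then have "L \<le> L * e * L" using mult_right_mono[OF 2(2) assms(2)] by simp
    also have "\<dots> \<le> e * q" using 2(1) assms(1) by (simp add: power2_eq_square mult.commute mult.left_commute)
    finally show ?thesis .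
  next
    case 3
    then have L: "L < 1 / e" using assms(1) by (simp add: less_divide_eq)
    then have "1 / e\<^sup>2 \<le> q" using assms(4) \<open>0 \<le> N / e\<close> assms(3) by linarith
    then have "e * (1 / e\<^sup>2) \<le> e * q" using assms(1) by (intro mult_left_mono) auto
    then show ?thesis using L assms(1) by (simp add: power2_eq_square)
  qed
qed

lemma Exp_factor_le:
  assumes short: "\<And>i p L. N \<le> L \<Longrightarrow> 0 < p \<Longrightarrow> p \<le> L\<^sup>2 \<Longrightarrow> \<exists>j<L. z (i + j) \<noteq> z (i + p + j)"
    and e: "0 < e" and n: "real N + real N / e + 1 / e + 1 / e\<^sup>2 \<le> real n" "1 \<le> n"
  shows "Exp (map z [i..<i + n]) \<le> 1 + e"
proof (rule Exp_le)
  show "map z [i..<i + n] \<noteq> []" using n(2) by simp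
next
  fix v assume v: "v \<noteq> []" "map z [i..<i + n] = frac_pow v (length (map z [i..<i + n]))"
  define q where "q = length v"
  have "1 \<le> q" using v(1) unfolding q_def by (simp add: Suc_leI)
  show "real (length (map z [i..<i + n])) / real (length v) \<le> 1 + e"
  proof (cases "n \<le> q")
    case True
    then have "real n / real q \<le> 1" using \<open>1 \<le> q\<close> by simp
    then show ?thesis using e unfolding q_def by simp
  next
    case False
    define L where "L = n - q"
    have "z (i + j) = z (i + q + j)" if "j < L" for j
      using that frac_pow_periodic[OF v, of j] unfolding L_def q_def by (simp add: ac_simps)
    then have "L < N \<or> L\<^sup>2 < q" using short[of L q i] \<open>1 \<le> q\<close> by force
    then have "real L < real N \<or> (real L)\<^sup>2 < real q" by (metis of_nat_less_iff of_nat_power)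
    then have "real L \<le> e * real q"
      using overhang_le[OF e, of "real L" "real N" "real q"] n False unfolding L_def by simp
    then show ?thesis using \<open>1 \<le> q\<close> False v(1) unfolding L_def q_def
      by (simp add: divide_le_eq algebra_simps)
  qed
qed

lemma ACE_le_1_if_repetitions_short:
  assumes "\<And>i p L. N \<le> L \<Longrightarrow> 0 < p \<Longrightarrow> p \<le> L\<^sup>2 \<Longrightarrow> \<exists>j<L. z (i + j) \<noteq> z (i + p + j)"
  shows "ACE z \<le> 1"
proof (rule ereal_le_epsilon2)
  fix e :: real assume e: "0 < e"
  define n0 :: nat where "n0 = nat \<lceil>real N + real N / e + 1 / e + 1 / e\<^sup>2\<rceil> + 1"
  have "(SUP x\<in>Fact n z. ereal (Exp x)) \<le> ereal (1 + e)" if "n0 \<le> n" for n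
  proof -
    have "real N + real N / e + 1 / e + 1 / e\<^sup>2 \<le> real n" "1 \<le> n"
      using that unfolding n0_def by linarith+
    then show ?thesis
      unfolding Fact_def using Exp_factor_le[OF assms e] by (auto intro: SUP_least)
  qed
  then have "ACE z \<le> ereal (1 + e)"
    unfolding ACE_def by (intro Limsup_bounded) (auto simp: eventually_sequentially)
  then show "ACE z \<le> 1 + ereal e" by (simp add: add.commute)
qed

section \<open>Periodic factors and their continuation\<close>

definition periodic_factor :: "'b list \<Rightarrow> nat \<Rightarrow> nat \<Rightarrow> nat \<Rightarrow> bool" where
  "periodic_factor z i p L \<longleftrightarrow> 0 < p \<and> i + p + L \<le> length z \<and> (\<forall>j<L. z ! (i + j) = z ! (i + p + j))"

lemma periodic_factor_append: "periodic_factor z i p L \<Longrightarrow> periodic_factor (z @ y) i p L"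
  unfolding periodic_factor_def by (auto simp: nth_append)

lemma periodic_factor_append_iff:
  "i + p + L \<le> length z \<Longrightarrow> periodic_factor (z @ y) i p L \<longleftrightarrow> periodic_factor z i p L"
  unfolding periodic_factor_def by (auto simp: nth_append)

text \<open>The guards p = 0 and k < p only serve termination.\<close>
function periodic_nth :: "'b list \<Rightarrow> nat \<Rightarrow> nat \<Rightarrow> 'b" where
  "periodic_nth z p k = (if k < length z \<or> p = 0 \<or> k < p then z ! k else periodic_nth z p (k - p))"
  by pat_completeness auto
termination by (relation "measure (\<lambda>(z, p, k). k)") auto

declare periodic_nth.simps [simp del]

definition periodic_extension :: "'b list \<Rightarrow> nat \<Rightarrow> nat \<Rightarrow> 'b list" where
  "periodic_extension z p l = map (\<lambda>m. periodic_nth z p (length z + m)) [0..<l]"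

lemma length_periodic_extension [simp]: "length (periodic_extension z p l) = l"
  by (simp add: periodic_extension_def)

lemma nth_eq_periodic_nth:
  assumes r: "periodic_factor z i p L" and "i + p \<le> b" "b \<le> length z" "k < i + p + L"
  shows "z ! k = periodic_nth (take b z) p k"
  using assms(4)
proof (induction k rule: less_induct)
  case (less k)
  show ?case
  proof (cases "k < b")
    case True
    then show ?thesis using assms(3) by (simp add: periodic_nth.simps)
  next
    case False
    have "0 < p" using r unfolding periodic_factor_def by simp
    with False assms(2,3) have "periodic_nth (take b z) p k = periodic_nth (take b z) p (k - p)"
      by (subst periodic_nth.simps) simp
    moreover have "z ! (k - p) = periodic_nth (take b z) p (k - p)"
      using less.IH[of "k - p"] less.prems \<open>0 < p\<close> False assms(2) by simp
    moreover have "z ! (k - p) = z ! k"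
    proof -
      have "k - p - i < L" using less.prems False assms(2) by simp
      then have "z ! (i + (k - p - i)) = z ! (i + p + (k - p - i))"
        using r unfolding periodic_factor_def by blast
      then show ?thesis using False assms(2) by simp
    qed
    ultimately show ?thesis by simp
  qed
qed

lemma prefix_periodic_extension:
  assumes r: "periodic_factor z i p L" and "i + p \<le> b" "b \<le> length z" "b + l \<le> i + p + L"
  shows "prefix (periodic_extension (take b z) p l) (drop b z)"
proof -
  have "i + p + L \<le> length z" using r unfolding periodic_factor_def by simp
  then have "periodic_extension (take b z) p l = take l (drop b z)"
    using assms nth_eq_periodic_nth[OF assms(1-3)]
    by (intro nth_equalityI) (simp_all add: periodic_extension_def)
  then show ?thesis by (simp add: take_is_prefix)
qed

lemma periodic_factor_morph_cut:
  assumes r: "periodic_factor (morph h V) i p L" and bnd: "\<And>c. length (h c) \<le> M"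
    and "0 < M" "M \<le> L"
  obtains s where "s < length V" "i + p \<le> length (morph h (take s V))"
    "prefix (periodic_extension (morph h (take s V)) p (L - M)) (morph h (drop s V))"
proof -
  have len: "i + p + L \<le> length (morph h V)" using r unfolding periodic_factor_def by simp
  then obtain s where s: "i + p \<le> length (morph h (take s V))" "length (morph h (take s V)) < i + p + M"
    using morph_cut_above[of h M "i + p" V, OF bnd \<open>0 < M\<close>] by auto
  have "s < length V"
    using s(2) len \<open>M \<le> L\<close> by (cases "s < length V") auto
  moreover have "morph h (take s V) = take (length (morph h (take s V))) (morph h V)"
    by (metis append_eq_conv_conj append_take_drop_id morph_append)
  moreover have "length (morph h (take s V)) \<le> length (morph h V)"
    by (metis prefix_length_le prefix_morph_take)
  ultimately show ?thesis
    using that s prefix_periodic_extension[OF r s(1), of "L - M"] \<open>M \<le> L\<close>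
    by (simp add: morph_drop)
qed

section \<open>Counting good words\<close>

definition preimages_extending :: "('a \<Rightarrow> 'b list) \<Rightarrow> 'b list \<Rightarrow> nat \<Rightarrow> nat \<Rightarrow> 'a list set" where
  "preimages_extending h u K t =
     {x. length x = t \<and> prefix u (morph h x) \<and> length (morph h x) < length u + K}"

lemma finite_lists_length_less: "finite (UNIV :: 'a set) \<Longrightarrow> finite {xs :: 'a list. length xs < n}"
  using finite_lists_length_le[of "UNIV :: 'a set" n] by (auto elim!: finite_subset[rotated])

lemma finite_lists_length: "finite (UNIV :: 'a set) \<Longrightarrow> finite {xs :: 'a list. length xs = n}"
  using finite_lists_length_eq[of "UNIV :: 'a set" n] by simp

lemma finite_preimages_extending:
  "finite (UNIV :: 'a set) \<Longrightarrow> finite (preimages_extending h u K t :: 'a list set)"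
  unfolding preimages_extending_def by (rule finite_subset[OF _ finite_lists_length[of t]]) auto

text \<open>Cut x at the last letter boundary of h(x) inside u: the image of the first part is the
  prefix of u of the same length, and by injectivity of h it determines the first part.\<close>
lemma card_preimages_extending_le:
  fixes h :: "'a \<Rightarrow> 'b list"
  assumes inj: "inj (morph h)" and bnd: "\<And>c. length (h c) \<le> M" and fin: "finite (UNIV :: 'a set)"
  shows "card (preimages_extending h u K t) \<le> (length u + 1) * card {xs :: 'a list. length xs < K + M}"
proof -
  let ?S = "preimages_extending h u K t" and ?T = "{xs :: 'a list. length xs < K + M}"
  have ne: "\<And>c. h c \<noteq> []" using inj by (rule inj_morph_nonempty)
  have "0 < M" using bnd[of undefined] ne[of undefined] by (metis length_greater_0_conv less_le_trans)
  have "\<forall>x\<in>?S. \<exists>k. prefix (morph h (take k x)) u \<and> length u < length (morph h (take k x)) + M"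
    using morph_cut_below[of h M, OF bnd \<open>0 < M\<close>] unfolding preimages_extending_def by blast
  then obtain k where k: "\<And>x. x \<in> ?S \<Longrightarrow> prefix (morph h (take (k x) x)) u"
    "\<And>x. x \<in> ?S \<Longrightarrow> length u < length (morph h (take (k x) x)) + M"
    by metis
  define f where "f x = (length (morph h (take (k x) x)), drop (k x) x)" for x
  have "inj_on f ?S"
  proof (rule inj_onI)
    fix x y assume "x \<in> ?S" "y \<in> ?S" "f x = f y"
    then have "morph h (take (k x) x) = morph h (take (k y) y)"
      using k(1) unfolding f_def by (metis prefix_length_prefix prefix_order.antisym order_refl fst_conv)
    then have "take (k x) x = take (k y) y" using inj by (simp add: inj_eq)
    with \<open>f x = f y\<close> show "x = y" unfolding f_def by (metis append_take_drop_id snd_conv)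
  qed
  moreover have "f ` ?S \<subseteq> {..length u} \<times> ?T"
  proof (rule image_subsetI)
    fix x assume x: "x \<in> ?S"
    have "morph h x = morph h (take (k x) x) @ morph h (drop (k x) x)"
      by (metis append_take_drop_id morph_append)
    then have "length (drop (k x) x) < K + M"
      using x k(2)[OF x] length_le_length_morph[of h "drop (k x) x", OF ne]
      unfolding preimages_extending_def by simp
    then show "f x \<in> {..length u} \<times> ?T"
      using prefix_length_le[OF k(1)[OF x]] unfolding f_def by simp
  qed
  ultimately have "card ?S \<le> card ({..length u} \<times> ?T)"
    using finite_lists_length_less[OF fin] by (intro card_inj_on_le) auto
  then show ?thesis by (simp add: card_cartesian_product)
qed

lemma summable_poly_times_geometric: "summable (\<lambda>d. real (M * (d + 2) + 1) ^ 4 * (2/3 :: real) ^ d)"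
proof (cases "M = 0")
  case True
  then show ?thesis by (simp add: summable_geometric)
next
  case False
  then have "0 < real M" by simp
  then have "(\<lambda>d. (real M * real d + 2 * real M + 1) ^ 4 * (2/3 :: real) ^ d) \<in> O(\<lambda>d. (3/4) ^ d)"
    by real_asymp
  then have "(\<lambda>d. real (M * (d + 2) + 1) ^ 4 * (2/3 :: real) ^ d) \<in> O(\<lambda>d. (3/4) ^ d)"
    by (simp add: algebra_simps)
  then show ?thesis
    by (rule summable_comparison_test_bigo[rotated]) (simp add: summable_geometric)
qed

lemma summable_tail_le:
  fixes f :: "nat \<Rightarrow> real"
  assumes "summable f" "0 < \<epsilon>"
  shows "\<exists>D. \<forall>K. (\<Sum>d=D..K. f d) \<le> \<epsilon>"
proof -
  obtain D where D: "\<forall>m\<ge>D. \<forall>n. norm (sum f {m..<n}) < \<epsilon>"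
    using assms unfolding summable_Cauchy by blast
  have "(\<Sum>d=D..K. f d) \<le> \<epsilon>" for K
    using D[rule_format, of D "Suc K"] by (simp add: atLeastLessThanSuc_atLeastAtMost abs_less_iff)
  then show ?thesis by blast
qed

definition bounded_codes :: "nat \<Rightarrow> ('a \<Rightarrow> 'b list) set" where
  "bounded_codes M = {h. inj (morph h) \<and> (\<forall>c. length (h c) \<le> M)}"

definition card_short_words :: "'a itself \<Rightarrow> nat \<Rightarrow> nat" where
  "card_short_words A M = card {xs :: 'a list. length xs < 3 * M}"

text \<open>Bound on the bad extensions at depth d relative to the number of good words of length n:
  the codes h, the tails, the pairs (L, p) weighted by L + 1, and (2/3)^d for the good prefixes
  of length n - d.\<close>
definition bad_weight :: "'a itself \<Rightarrow> 'b itself \<Rightarrow> nat \<Rightarrow> nat \<Rightarrow> real" where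
  "bad_weight A B M d = real (card (bounded_codes M :: ('a \<Rightarrow> 'b list) set))
     * real (card_short_words A M) * real (M * (d + 2) + 1) ^ 4 * (2/3) ^ d"

definition depth_bound :: "'a itself \<Rightarrow> 'b itself \<Rightarrow> nat \<Rightarrow> nat" where
  "depth_bound A B M = (SOME D. \<forall>K. (\<Sum>d=D..K. bad_weight A B M d) \<le> 1 / (4 * 2 ^ M))"

text \<open>Since a repetition at depth d has L \<le> M (d + 2), this threshold forces both
  depth_bound \<le> d and M < d + 2.\<close>
definition threshold :: "'a itself \<Rightarrow> 'b itself \<Rightarrow> nat \<Rightarrow> nat" where
  "threshold A B M = M * (depth_bound A B M + 2) + M * M + 1"

text \<open>The parameter B only fixes the target alphabet.\<close>
definition good :: "'b itself \<Rightarrow> 'a list \<Rightarrow> bool" where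
  "good B v \<longleftrightarrow> (\<forall>M (h :: 'a \<Rightarrow> 'b list) i p L. h \<in> bounded_codes M \<longrightarrow>
     threshold TYPE('a) B M \<le> L \<longrightarrow> p \<le> L\<^sup>2 \<longrightarrow> \<not> periodic_factor (morph h v) i p L)"

definition good_words :: "'b itself \<Rightarrow> nat \<Rightarrow> 'a list set" where
  "good_words B n = {v. length v = n \<and> good B v}"

definition bad_extensions :: "'b itself \<Rightarrow> nat \<Rightarrow> 'a list set" where
  "bad_extensions B n = {v @ [c] | v c. v \<in> good_words B n \<and> \<not> good B (v @ [c])}"

definition bad_cover :: "'b itself \<Rightarrow> nat \<Rightarrow> nat \<Rightarrow> ('a \<Rightarrow> 'b list) \<Rightarrow> nat \<Rightarrow> nat \<Rightarrow> nat \<Rightarrow> 'a list set"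
  where "bad_cover B n M h s L p = (\<Union>y\<in>good_words B s. (@) y `
     preimages_extending h (periodic_extension (morph h y) p (L - M)) (2 * M) (n + 1 - s))"

lemma depth_bound_tail: "(\<Sum>d=depth_bound A B M..K. bad_weight A B M d) \<le> 1 / (4 * 2 ^ M)"
proof -
  have "summable (bad_weight A B M)"
    unfolding bad_weight_def mult.assoc by (intro summable_mult summable_poly_times_geometric)
  then have "\<exists>D. \<forall>K. (\<Sum>d=D..K. bad_weight A B M d) \<le> 1 / (4 * 2 ^ M)"
    by (rule summable_tail_le) simp
  then show ?thesis unfolding depth_bound_def by (rule someI_ex[THEN spec])
qed

lemma good_appendD: "good B (v @ u) \<Longrightarrow> good B v"
  unfolding good_def using periodic_factor_append by (metis morph_append)

lemma good_take: "good B v \<Longrightarrow> good B (take s v)"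
  by (metis append_take_drop_id good_appendD)

lemma good_Nil: "good B []"
  unfolding good_def periodic_factor_def by auto

lemma finite_bounded_codes:
  assumes "finite (UNIV :: 'a set)" "finite (UNIV :: 'b set)"
  shows "finite (bounded_codes M :: ('a \<Rightarrow> 'b list) set)"
proof (rule finite_subset)
  let ?B = "{zs :: 'b list. set zs \<subseteq> UNIV \<and> length zs \<le> M}"
  show "bounded_codes M \<subseteq> {h. \<forall>c. (c \<in> UNIV \<longrightarrow> h c \<in> ?B) \<and> (c \<notin> UNIV \<longrightarrow> h c = [])}"
    unfolding bounded_codes_def by auto
  show "finite {h. \<forall>c. (c \<in> (UNIV :: 'a set) \<longrightarrow> h c \<in> ?B) \<and> (c \<notin> UNIV \<longrightarrow> h c = [])}"
    using assms by (intro finite_set_of_finite_funs finite_lists_length_le)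
qed

lemma finite_good_words: "finite (UNIV :: 'a set) \<Longrightarrow> finite (good_words B n :: 'a list set)"
  unfolding good_words_def by (rule finite_subset[OF _ finite_lists_length[of n]]) auto

lemma le_of_threshold_le: "threshold A B M \<le> L \<Longrightarrow> M \<le> L"
  unfolding threshold_def by (rule order_trans[of _ "M * 2"]) simp_all

lemma threshold_le_depth:
  assumes "threshold A B M \<le> L" "L \<le> M * (d + 2)"
  shows "depth_bound A B M \<le> d" "M < d + 2"
proof -
  have "M * (depth_bound A B M + 2) < M * (d + 2)" "M * M < M * (d + 2)"
    using assms unfolding threshold_def by linarith+
  then show "depth_bound A B M \<le> d" "M < d + 2" by (simp_all only: mult_less_cancel1) simp_all
qed

lemma bad_extension_in_bad_cover:
  fixes B :: "'b itself" and v :: "'a list"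
  assumes v: "v \<in> good_words B n" and bad: "\<not> good B (v @ [c])"
  shows "\<exists>M\<in>{1..Suc n}. \<exists>h\<in>bounded_codes M. \<exists>d\<in>{depth_bound TYPE('a) B M..n}.
           \<exists>L\<in>{..M * (d + 2)}. \<exists>p\<in>{1..L\<^sup>2}. v @ [c] \<in> bad_cover B n M h (n - d) L p"
proof -
  define V where "V = v @ [c]"
  from bad obtain M and h :: "'a \<Rightarrow> 'b list" and i p L where
    h: "h \<in> bounded_codes M" and L: "threshold TYPE('a) B M \<le> L" and "p \<le> L\<^sup>2"
    and r: "periodic_factor (morph h V) i p L"
    unfolding good_def V_def by blast
  have lv: "length v = n" and "good B v" using v unfolding good_words_def by auto
  have inj: "inj (morph h)" and bnd: "\<And>c. length (h c) \<le> M"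
    using h unfolding bounded_codes_def by auto
  have "0 < M" using bnd[of c] inj_morph_nonempty[OF inj, of c] by (metis length_greater_0_conv less_le_trans)
  have "0 < p" using r unfolding periodic_factor_def by simp
  have "M \<le> L" using L by (rule le_of_threshold_le)
  obtain s where s: "s < length V" "i + p \<le> length (morph h (take s V))"
    and ext: "prefix (periodic_extension (morph h (take s V)) p (L - M)) (morph h (drop s V))"
    by (rule periodic_factor_morph_cut[OF r bnd \<open>0 < M\<close> \<open>M \<le> L\<close>])
  define d where "d = n - s"
  have "s \<le> n" "length (drop s V) = d + 1" using s(1) lv unfolding V_def d_def by auto
  have "take s V \<in> good_words B s"
    using good_take[OF \<open>good B v\<close>, of s] \<open>s \<le> n\<close> lv unfolding good_words_def V_def by simp
  have short: "length (morph h v) < i + p + L"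
  proof (rule ccontr)
    assume "\<not> ?thesis"
    then have "periodic_factor (morph h v) i p L"
      using r periodic_factor_append_iff[of i p L "morph h v" "h c"] unfolding V_def by simp
    then show False using \<open>good B v\<close> h L \<open>p \<le> L\<^sup>2\<close> unfolding good_def by blast
  qed
  have "length (morph h (take s V)) + length (morph h (drop s V)) = length (morph h V)"
    by (metis append_take_drop_id length_append morph_append)
  then have "length (morph h (drop s V)) < L - M + 2 * M"
    using short s(2) bnd[of c] \<open>M \<le> L\<close> unfolding V_def by simp
  then have "drop s V \<in> preimages_extending h
      (periodic_extension (morph h (take s V)) p (L - M)) (2 * M) (n + 1 - s)"
    using ext \<open>length (drop s V) = d + 1\<close> \<open>s \<le> n\<close> unfolding preimages_extending_def d_def by simp
  moreover have nd: "n - d = s" using \<open>s \<le> n\<close> unfolding d_def by simp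
  ultimately have cover: "V \<in> bad_cover B n M h (n - d) L p"
    unfolding bad_cover_def nd
    by (intro UN_I[OF \<open>take s V \<in> good_words B s\<close>] image_eqI[where x = "drop s V"]) simp_all
  have "L - M \<le> M * (d + 1)"
    using prefix_length_le[OF ext] length_morph_le[of h M "drop s V", OF bnd]
      \<open>length (drop s V) = d + 1\<close> by simp
  then have Ld: "L \<le> M * (d + 2)" by simp
  with L have "depth_bound TYPE('a) B M \<le> d" "M < d + 2" by (rule threshold_le_depth)+
  then have "depth_bound TYPE('a) B M \<le> d" "d \<le> n" "M \<le> Suc n" unfolding d_def by simp_all
  then show ?thesis
    using h \<open>0 < M\<close> \<open>0 < p\<close> \<open>p \<le> L\<^sup>2\<close> Ld cover unfolding V_def
    by (intro bexI[of _ M] bexI[of _ h] bexI[of _ d] bexI[of _ L] bexI[of _ p]) auto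
qed

lemma card_UN_le_sum:
  "finite I \<Longrightarrow> (\<And>i. i \<in> I \<Longrightarrow> card (A i) \<le> f i) \<Longrightarrow> card (\<Union>i\<in>I. A i) \<le> (\<Sum>i\<in>I. f i)"
  by (rule order_trans[OF card_UN_le]) (auto intro: sum_mono)

lemma bad_cover_subset: "s \<le> n \<Longrightarrow> bad_cover B n M h s L p \<subseteq> {xs. length xs = n + 1}"
  unfolding bad_cover_def good_words_def preimages_extending_def by auto

lemma card_bad_cover_le:
  fixes B :: "'b itself" and h :: "'a \<Rightarrow> 'b list"
  assumes fin: "finite (UNIV :: 'a set)" and h: "h \<in> bounded_codes M"
  shows "card (bad_cover B n M h s L p)
    \<le> card (good_words B s :: 'a list set) * ((L + 1) * card_short_words TYPE('a) M)"
proof -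
  have inj: "inj (morph h)" and bnd: "\<And>c. length (h c) \<le> M"
    using h unfolding bounded_codes_def by auto
  let ?X = "\<lambda>y. preimages_extending h (periodic_extension (morph h y) p (L - M)) (2 * M) (n + 1 - s)"
  have each: "card ((@) y ` ?X y) \<le> (L + 1) * card_short_words TYPE('a) M" for y
  proof -
    have "card ((@) y ` ?X y) \<le> card (?X y)"
      by (rule card_image_le[OF finite_preimages_extending[OF fin]])
    also have "\<dots> \<le> (L - M + 1) * card {xs :: 'a list. length xs < 2 * M + M}"
      using card_preimages_extending_le[OF inj bnd fin, of "periodic_extension (morph h y) p (L - M)"]
      by (simp only: length_periodic_extension)
    also have "\<dots> \<le> (L + 1) * card_short_words TYPE('a) M"
      unfolding card_short_words_def by (intro mult_mono) (simp_all add: numeral_3_eq_3)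
    finally show ?thesis .
  qed
  have "card (bad_cover B n M h s L p)
    \<le> (\<Sum>y\<in>(good_words B s :: 'a list set). (L + 1) * card_short_words TYPE('a) M)"
    unfolding bad_cover_def by (intro card_UN_le_sum finite_good_words[OF fin] each)
  then show ?thesis by simp
qed

lemma sum_periods_le: "(\<Sum>L\<le>X. \<Sum>p=1..L\<^sup>2. (L + 1) * (a::nat)) \<le> (X + 1) ^ 4 * a"
proof -
  have "(\<Sum>L\<le>X. \<Sum>p=1..L\<^sup>2. (L + 1) * a) = (\<Sum>L\<le>X. L\<^sup>2 * (L + 1) * a)"
    by (simp only: sum_constant card_atLeastAtMost diff_Suc_1 of_nat_id mult.assoc)
  also have "\<dots> \<le> (\<Sum>L\<le>X. (X + 1) ^ 3 * a)"
  proof (rule sum_mono)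
    fix L assume "L \<in> {..X}"
    then have "L\<^sup>2 * (L + 1) \<le> (X + 1)\<^sup>2 * (X + 1)" by (intro mult_mono power_mono) auto
    also have "\<dots> = (X + 1) ^ 3" by (simp add: power2_eq_square power3_eq_cube)
    finally show "L\<^sup>2 * (L + 1) * a \<le> (X + 1) ^ 3 * a" by (rule mult_right_mono) simp
  qed
  also have "\<dots> = (X + 1) * ((X + 1) ^ 3 * a)" by simp
  also have "\<dots> = (X + 1) ^ 4 * a" by (simp only: mult.assoc[symmetric] power_Suc[symmetric]) simp
  finally show ?thesis .
qed

lemma card_bad_extensions_le:
  fixes B :: "'b itself"
  assumes fa: "finite (UNIV :: 'a set)" and fb: "finite (UNIV :: 'b set)"
  shows "card (bad_extensions B n :: 'a list set) \<le> (\<Sum>M=1..Suc n. \<Sum>d=depth_bound TYPE('a) B M..n.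
     card (bounded_codes M :: ('a \<Rightarrow> 'b list) set)
       * ((M * (d + 2) + 1) ^ 4 * (card_short_words TYPE('a) M * card (good_words B (n - d) :: 'a list set))))"
    (is "_ \<le> ?bound")
proof -
  define U where "U = (\<Union>M\<in>{1..Suc n}. \<Union>h\<in>(bounded_codes M :: ('a \<Rightarrow> 'b list) set).
     \<Union>d\<in>{depth_bound TYPE('a) B M..n}. \<Union>L\<in>{..M * (d + 2)}. \<Union>p\<in>{1..L\<^sup>2}. bad_cover B n M h (n - d) L p)"
  have "bad_extensions B n \<subseteq> U"
  proof
    fix w :: "'a list" assume "w \<in> bad_extensions B n"
    then obtain v c where "w = v @ [c]" "v \<in> good_words B n" "\<not> good B (v @ [c])"
      unfolding bad_extensions_def by blast
    then obtain M h d L p where "M \<in> {1..Suc n}" "h \<in> bounded_codes M"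
      "d \<in> {depth_bound TYPE('a) B M..n}" "L \<in> {..M * (d + 2)}" "p \<in> {1..L\<^sup>2}"
      "w \<in> bad_cover B n M h (n - d) L p"
      using bad_extension_in_bad_cover by metis
    then show "w \<in> U" unfolding U_def by blast
  qed
  moreover have "U \<subseteq> {xs. length xs = n + 1}"
    unfolding U_def by (intro UN_least bad_cover_subset diff_le_self)
  then have "finite U" using finite_lists_length[OF fa] by (rule finite_subset)
  ultimately have "card (bad_extensions B n :: 'a list set) \<le> card U" by (rule card_mono[rotated])
  also have "\<dots> \<le> (\<Sum>M=1..Suc n. \<Sum>h\<in>(bounded_codes M :: ('a \<Rightarrow> 'b list) set).
      \<Sum>d=depth_bound TYPE('a) B M..n. \<Sum>L\<le>M * (d + 2). \<Sum>p=1..L\<^sup>2.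
      (L + 1) * (card_short_words TYPE('a) M * card (good_words B (n - d) :: 'a list set)))"
  proof -
    have "card (bad_cover B n M h (n - d) L p)
      \<le> (L + 1) * (card_short_words TYPE('a) M * card (good_words B (n - d) :: 'a list set))"
      if "h \<in> bounded_codes M" for M and h :: "'a \<Rightarrow> 'b list" and d L p
      using card_bad_cover_le[OF fa that, of B n "n - d" L p] by (simp add: algebra_simps)
    then show ?thesis
      unfolding U_def
      by (intro card_UN_le_sum finite_bounded_codes[OF fa fb] finite_atLeastAtMost finite_atMost)
  qed
  also have "\<dots> \<le> ?bound"
  proof (rule sum_mono)
    fix M
    let ?a = "\<lambda>d. card_short_words TYPE('a) M * card (good_words B (n - d) :: 'a list set)"
    have "(\<Sum>d=depth_bound TYPE('a) B M..n. \<Sum>L\<le>M * (d + 2). \<Sum>p=1..L\<^sup>2. (L + 1) * ?a d)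
      \<le> (\<Sum>d=depth_bound TYPE('a) B M..n. (M * (d + 2) + 1) ^ 4 * ?a d)"
      by (intro sum_mono sum_periods_le)
    then show "(\<Sum>h\<in>(bounded_codes M :: ('a \<Rightarrow> 'b list) set). \<Sum>d=depth_bound TYPE('a) B M..n.
        \<Sum>L\<le>M * (d + 2). \<Sum>p=1..L\<^sup>2. (L + 1) * ?a d)
      \<le> (\<Sum>d=depth_bound TYPE('a) B M..n. card (bounded_codes M :: ('a \<Rightarrow> 'b list) set)
        * ((M * (d + 2) + 1) ^ 4 * ?a d))"
      by (simp add: sum_distrib_left[symmetric])
  qed
  finally show ?thesis .
qed

lemma sum_inverse_powers_of_two_le: "(\<Sum>M=1..m. 1 / (4 * 2 ^ M) :: real) \<le> 1 / 2"
proof -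
  have "(\<Sum>M=1..m. 1 / (4 * 2 ^ M) :: real) = (1 / 4) * (\<Sum>M\<in>{1..m}. (1 / 2) ^ M)"
    by (simp add: sum_distrib_left power_one_over)
  also have "(\<Sum>M\<in>{1..m}. (1 / 2 :: real) ^ M) \<le> (\<Sum>M. (1 / 2) ^ M)"
    by (intro sum_le_suminf summable_geometric) auto
  also have "(\<Sum>M. (1 / 2 :: real) ^ M) = 2"
    by (simp add: suminf_geometric)
  finally show ?thesis by simp
qed

lemma card_bad_extensions_le_half:
  fixes B :: "'b itself"
  assumes fa: "finite (UNIV :: 'a set)" and fb: "finite (UNIV :: 'b set)"
    and decay: "\<And>s. s \<le> n \<Longrightarrow>
      real (card (good_words B s :: 'a list set)) \<le> (2/3) ^ (n - s) * real (card (good_words B n :: 'a list set))"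
  shows "real (card (bad_extensions B n :: 'a list set)) \<le> real (card (good_words B n :: 'a list set)) / 2"
proof -
  define G where "G s = real (card (good_words B s :: 'a list set))" for s
  have "real (card (bad_extensions B n :: 'a list set)) \<le> (\<Sum>M=1..Suc n. \<Sum>d=depth_bound TYPE('a) B M..n.
     real (card (bounded_codes M :: ('a \<Rightarrow> 'b list) set))
       * (real (M * (d + 2) + 1) ^ 4 * (real (card_short_words TYPE('a) M) * G (n - d))))"
    by (rule order_trans[OF of_nat_mono[OF card_bad_extensions_le[OF fa fb]]])
      (simp only: G_def of_nat_sum of_nat_mult of_nat_power order_refl)
  also have "\<dots> \<le> (\<Sum>M=1..Suc n. \<Sum>d=depth_bound TYPE('a) B M..n. bad_weight TYPE('a) B M d * G n)"
  proof (intro sum_mono)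
    fix M d assume "d \<in> {depth_bound TYPE('a) B M..n}"
    then have "G (n - d) \<le> (2/3) ^ d * G n" using decay[of "n - d"] unfolding G_def by simp
    then have "real (card (bounded_codes M :: ('a \<Rightarrow> 'b list) set))
       * (real (M * (d + 2) + 1) ^ 4 * (real (card_short_words TYPE('a) M) * G (n - d)))
      \<le> real (card (bounded_codes M :: ('a \<Rightarrow> 'b list) set))
       * (real (M * (d + 2) + 1) ^ 4 * (real (card_short_words TYPE('a) M) * ((2/3) ^ d * G n)))"
      by (intro mult_left_mono) simp_all
    also have "\<dots> = bad_weight TYPE('a) B M d * G n"
      unfolding bad_weight_def by (simp only: ac_simps)
    finally show "real (card (bounded_codes M :: ('a \<Rightarrow> 'b list) set))
       * (real (M * (d + 2) + 1) ^ 4 * (real (card_short_words TYPE('a) M) * G (n - d)))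
      \<le> bad_weight TYPE('a) B M d * G n" .
  qed
  also have "\<dots> = G n * (\<Sum>M=1..Suc n. \<Sum>d=depth_bound TYPE('a) B M..n. bad_weight TYPE('a) B M d)"
    by (simp only: sum_distrib_left mult.commute)
  also have "\<dots> \<le> G n * (\<Sum>M=1..Suc n. 1 / (4 * 2 ^ M))"
    unfolding G_def by (intro mult_left_mono sum_mono depth_bound_tail) simp
  also have "\<dots> \<le> G n * (1 / 2)"
    unfolding G_def by (intro mult_left_mono sum_inverse_powers_of_two_le) simp
  finally show ?thesis unfolding G_def by simp
qed

lemma le_geometric_of_growth:
  fixes G :: "nat \<Rightarrow> real"
  assumes "\<And>k. k < n \<Longrightarrow> 3/2 * G k \<le> G (Suc k)" "\<And>k. 0 \<le> G k" "s \<le> n"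
  shows "G s \<le> (2/3) ^ (n - s) * G n"
  using assms
proof (induction n)
  case (Suc n)
  show ?case
  proof (cases "s = Suc n")
    case False
    then have "G s \<le> (2/3) ^ (n - s) * G n" using Suc by simp
    also have "\<dots> \<le> (2/3) ^ (n - s) * ((2/3) * G (Suc n))"
      using Suc.prems(1)[of n] by (intro mult_left_mono) auto
    also have "\<dots> = (2/3) ^ (Suc n - s) * G (Suc n)"
      using False Suc.prems(3) by (simp add: Suc_diff_le)
    finally show ?thesis .
  qed simp
qed simp

lemma card_good_words_Suc_ge:
  fixes B :: "'b itself"
  assumes fa: "finite (UNIV :: 'a set)" and "card (UNIV :: 'a set) = 2"
  shows "2 * card (good_words B n :: 'a list set)
    \<le> card (good_words B (Suc n) :: 'a list set) + card (bad_extensions B n :: 'a list set)"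
proof -
  let ?A = "(\<lambda>(v, c). v @ [c]) ` ((good_words B n :: 'a list set) \<times> (UNIV :: 'a set))"
  have "inj_on (\<lambda>(v, c). v @ [c]) ((good_words B n :: 'a list set) \<times> (UNIV :: 'a set))"
    by (rule inj_onI) auto
  then have "card ?A = 2 * card (good_words B n :: 'a list set)"
    using assms(2) by (simp add: card_image card_cartesian_product)
  moreover have "?A \<subseteq> good_words B (Suc n) \<union> bad_extensions B n"
    unfolding good_words_def bad_extensions_def by auto
  moreover have "bad_extensions B n \<subseteq> {xs :: 'a list. length xs = Suc n}"
    unfolding bad_extensions_def good_words_def by auto
  then have "finite (good_words B (Suc n) \<union> (bad_extensions B n :: 'a list set))"
    using finite_good_words[OF fa] finite_lists_length[OF fa] finite_subset by blast
  ultimately show ?thesis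
    by (metis card_Un_le card_mono order_trans)
qed

lemma card_good_words_growth:
  fixes B :: "'b itself"
  assumes fa: "finite (UNIV :: 'a set)" and fb: "finite (UNIV :: 'b set)"
    and c2: "card (UNIV :: 'a set) = 2"
  shows "k < n \<Longrightarrow> 3/2 * real (card (good_words B k :: 'a list set))
    \<le> real (card (good_words B (Suc k) :: 'a list set))"
proof (induction n arbitrary: k)
  case (Suc n)
  define G where "G s = real (card (good_words B s :: 'a list set))" for s
  have "3/2 * G n \<le> G (Suc n)"
  proof -
    have "G s \<le> (2/3) ^ (n - s) * G n" if "s \<le> n" for s
      using le_geometric_of_growth[of n G] Suc.IH that unfolding G_def by simp
    then have "real (card (bad_extensions B n :: 'a list set)) \<le> G n / 2"
      using card_bad_extensions_le_half[OF fa fb] unfolding G_def by blast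
    moreover have "real (2 * card (good_words B n :: 'a list set))
      \<le> real (card (good_words B (Suc n) :: 'a list set) + card (bad_extensions B n :: 'a list set))"
      using card_good_words_Suc_ge[OF fa c2, of B n] by (simp only: of_nat_le_iff)
    then have "2 * G n \<le> G (Suc n) + real (card (bad_extensions B n :: 'a list set))"
      unfolding G_def by simp
    ultimately show ?thesis by simp
  qed
  then show ?case using Suc unfolding G_def by (cases "k = n") simp_all
qed simp

lemma good_words_nonempty:
  fixes B :: "'b itself"
  assumes "finite (UNIV :: 'a set)" "finite (UNIV :: 'b set)" "card (UNIV :: 'a set) = 2"
  shows "good_words B n \<noteq> ({} :: 'a list set)"
proof -
  have "(3/2) ^ k \<le> real (card (good_words B k :: 'a list set))" for k
  proof (induction k)
    case 0
    have "good_words B 0 = ({[]} :: 'a list set)" unfolding good_words_def using good_Nil by auto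
    then show ?case by simp
  next
    case (Suc k)
    then show ?case using card_good_words_growth[OF assms, of k "Suc k" B] by simp
  qed
  from this[of n] show ?thesis by (metis card.empty of_nat_0 not_le zero_less_power zero_less_divide_iff
    zero_less_numeral)
qed

section \<open>An infinite word with good prefixes\<close>

definition extendable :: "'b itself \<Rightarrow> 'a list \<Rightarrow> bool" where
  "extendable B v \<longleftrightarrow> (\<forall>m. \<exists>u. length u = m \<and> good B (v @ u))"

lemma extendable_Nil:
  assumes "finite (UNIV :: 'a set)" "finite (UNIV :: 'b set)" "card (UNIV :: 'a set) = 2"
  shows "extendable (B :: 'b itself) ([] :: 'a list)"
  using good_words_nonempty[OF assms] unfolding extendable_def good_words_def by fastforce

text \<open>The pigeonhole step of Koenig's lemma.\<close>
lemma extendable_snoc: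
  assumes fin: "finite (UNIV :: 'a set)" and e: "extendable B (v :: 'a list)"
  shows "\<exists>c. extendable B (v @ [c])"
proof (rule ccontr)
  assume "\<nexists>c. extendable B (v @ [c])"
  then have "\<forall>c. \<exists>m. \<forall>u. length u = m \<longrightarrow> \<not> good B (v @ [c] @ u)"
    unfolding extendable_def by auto
  then obtain f where f: "\<And>c u. length u = f c \<Longrightarrow> \<not> good B (v @ [c] @ u)"
    by metis
  obtain u where u: "length u = Suc (Max (range f))" "good B (v @ u)"
    using e unfolding extendable_def by blast
  then obtain c u' where "u = c # u'" by (cases u) auto
  with u fin have "length (take (f c) u') = f c" "v @ u = (v @ [c] @ take (f c) u') @ drop (f c) u'"
    by auto
  with f u(2) good_appendD show False by metis
qed

fun extendable_prefix :: "'b itself \<Rightarrow> nat \<Rightarrow> 'a list" where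
  "extendable_prefix B 0 = []"
| "extendable_prefix B (Suc k) =
    extendable_prefix B k @ [SOME c. extendable B (extendable_prefix B k @ [c])]"

lemma length_extendable_prefix [simp]: "length (extendable_prefix B k) = k"
  by (induction k) auto

lemma extendable_extendable_prefix:
  fixes B :: "'b itself"
  assumes "finite (UNIV :: 'a set)" "finite (UNIV :: 'b set)" "card (UNIV :: 'a set) = 2"
  shows "extendable B (extendable_prefix B k :: 'a list)"
proof (induction k)
  case 0
  show ?case using extendable_Nil[OF assms] by simp
next
  case (Suc k)
  show ?case using someI_ex[OF extendable_snoc[OF assms(1) Suc.IH]] by simp
qed

lemma exists_good_infinite_word:
  assumes "finite (UNIV :: 'a set)" "finite (UNIV :: 'b set)" "card (UNIV :: 'a set) = 2"
  shows "\<exists>w :: nat \<Rightarrow> 'a. \<forall>n. good TYPE('b) (map w [0..<n])"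
proof -
  define w :: "nat \<Rightarrow> 'a" where "w i = extendable_prefix TYPE('b) (Suc i) ! i" for i
  have "map w [0..<n] = extendable_prefix TYPE('b) n" for n
    by (induction n) (simp_all add: w_def nth_append)
  moreover have "good TYPE('b) (extendable_prefix TYPE('b) n :: 'a list)" for n
    using extendable_extendable_prefix[OF assms, of "TYPE('b)" n]
    unfolding extendable_def by (metis append_Nil2 length_0_conv)
  ultimately show ?thesis by metis
qed

lemma morph_inf_repetitions_short:
  fixes w :: "nat \<Rightarrow> 'a" and h :: "'a \<Rightarrow> 'b list"
  assumes fin: "finite (UNIV :: 'a set)" and good: "\<And>n. good TYPE('b) (map w [0..<n])"
    and inj: "inj (morph h)"
  obtains N where "\<And>i p L. N \<le> L \<Longrightarrow> 0 < p \<Longrightarrow> p \<le> L\<^sup>2 \<Longrightarrow>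
    \<exists>j<L. morph_inf h w (i + j) \<noteq> morph_inf h w (i + p + j)"
proof
  define M where "M = (\<Sum>c\<in>UNIV. length (h c))"
  have h: "h \<in> bounded_codes M"
    unfolding bounded_codes_def M_def using inj fin by (auto intro: member_le_sum)
  have ne: "\<And>c. h c \<noteq> []" using inj by (rule inj_morph_nonempty)
  fix i p L
  assume L: "threshold TYPE('a) TYPE('b) M \<le> L" and "0 < p" "p \<le> L\<^sup>2"
  define z where "z = morph h (map w [0..<i + p + L])"
  have "i + p + L \<le> length z"
    using length_le_length_morph[of h "map w [0..<i + p + L]", OF ne] unfolding z_def by simp
  then have z: "morph_inf h w k = z ! k" if "k < i + p + L" for k
    using nth_morph_inf[of h k w "i + p + L", OF ne] that unfolding z_def by simp
  have "\<not> periodic_factor z i p L"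
    using good h L \<open>p \<le> L\<^sup>2\<close> unfolding good_def z_def by blast
  then show "\<exists>j<L. morph_inf h w (i + j) \<noteq> morph_inf h w (i + p + j)"
    using \<open>0 < p\<close> \<open>i + p + L \<le> length z\<close> z unfolding periodic_factor_def by auto
qed

theorem corollary31:
  assumes "card (UNIV :: 'a set) = 2"
    and "finite (UNIV :: 'b set)" and "card (UNIV :: 'b set) \<ge> 2"
  shows "\<exists>w :: nat \<Rightarrow> 'a. ACE_inj TYPE('b) w = 1"
proof -
  have fin: "finite (UNIV :: 'a set)" using assms(1) by (simp add: card_ge_0_finite)
  obtain w :: "nat \<Rightarrow> 'a" where good: "\<And>n. good TYPE('b) (map w [0..<n])"
    using exists_good_infinite_word[OF fin assms(2,1)] by blast
  obtain f :: "'a \<Rightarrow> 'b" where "inj f"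
    using card_le_inj[OF fin assms(2)] assms(1,3) by auto
  moreover have "morph (\<lambda>c. [f c]) = map f"
    unfolding morph_def by (simp add: fun_eq_iff)
  ultimately have "inj (morph (\<lambda>c. [f c]))"
    by (simp add: inj_mapI)
  then have codes: "{h :: 'a \<Rightarrow> 'b list. inj (morph h)} \<noteq> {}" by blast
  have "ACE (morph_inf h w) = 1" if "inj (morph h)" for h :: "'a \<Rightarrow> 'b list"
    using morph_inf_repetitions_short[OF fin good that] ACE_le_1_if_repetitions_short ACE_ge_1
    by (metis antisym)
  then have "ACE_inj TYPE('b) w = 1"
    unfolding ACE_inj_def using codes by (intro SUP_eq_const) auto
  then show ?thesis by blast
qed

end
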